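(* Let $\vec p=(1,1)$, and let $\vec a,\vec b,\vec c\in\mathbb{R}^2$, $\vec\alpha\in(-1,\infty)^2$. Then the following are equivalent: (1) $S_{\vec a,\vec b,\vec c}$ is bounded from $L^{\vec p}_{\vec\alpha}(T_B\times T_B)$ to $L^\infty(T_B\times T_B)$; (2) $T_{\vec a,\vec b,\vec c}$ is bounded from $L^{\vec p}_{\vec\alpha}(T_B\times T_B)$ to $L^\infty(T_B\times T_B)$; (3) for each $i\in\{1,2\}$: $a_i\ge 0$, $b_i\ge\alpha_i$, and $c_i=a_i+b_i-\alpha_i$.
   Context: Let $n$ be a positive integer. For $z=(z_1,\dots,z_n)\in\mathbb{C}^n$ write $z=x+iy$ with $x,y\in\mathbb{R}^n$, $z'=(z_1,\dots,z_{n-1})$, $y'=(y_1,\dots,y_{n-1})$. Let $B=\{y\in\mathbb{R}^n: |y'|^2<y_n\}$ and $T_B=\{x+iy: x\in\mathbb{R}^n, y\in B\}$. For $z\in T_B$ put $\rho(z)=y_n-|y'|^2>0$, and for $z,u\in T_B$ put $\rho(z,u)=\frac14\big(\sum_{j=1}^{n-1}(z_j-\overline{u_j})^2-2i(z_n-\overline{u_n})\big)$; this has positive real part, and complex powers $\rho(z,u)^c$ are taken with the principal branch. $dV$ is Lebesgue measure on $\mathbb{C}^n$ and $dV_\alpha(z)=\rho(z)^\alpha dV(z)$. For $\vec p=(p_1,p_2)\in[1,\infty]^2$ and $\vec\alpha=(\alpha_1,\alpha_2)$, $L^{\vec p}_{\vec\alpha}(T_B\times T_B)$ is the space of measurable $f$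 on $T_B\times T_B$ with finite mixed norm $\|f\|_{\vec p,\vec\alpha}=\big\{\int_{T_B}\big(\int_{T_B}|f(z,w)|^{p_1}dV_{\alpha_1}(z)\big)^{p_2/p_1}dV_{\alpha_2}(w)\big\}^{1/p_2}$, with the inner (resp. outer) integral replaced by an essential supremum in $z$ (resp. $w$) when $p_1=\infty$ (resp. $p_2=\infty$); when $\vec p=(\infty,\infty)$ this is $L^\infty(T_B\times T_B)$. For $\vec a=(a_1,a_2),\vec b=(b_1,b_2),\vec c=(c_1,c_2)\in\mathbb{R}^2$, $T_{\vec a,\vec b,\vec c}f(z,w)=\rho(z)^{a_1}\rho(w)^{a_2}\int_{T_B}\int_{T_B}\frac{\rho(u)^{b_1}\rho(\eta)^{b_2}}{\rho(z,u)^{c_1}\rho(w,\eta)^{c_2}}f(u,\eta)\,dV(u)\,dV(\eta)$ and $S_{\vec a,\vec b,\vec c}f(z,w)=\rho(z)^{a_1}\rho(w)^{a_2}\int_{T_B}\int_{T_B}\frac{\rho(u)^{b_1}\rho(\eta)^{b_2}}{|\rho(z,u)|^{c_1}|\rho(w,\eta)|^{c_2}}f(u,\eta)\,dV(u)\,dV(\eta)$. An operator is bounded from $X$ to $Y$ if for every $f\in X$ the defining integral converges for a.e. $(z,w)$ and $\|Tf\|_Y\le C\|f\|_X$ with $C$ independent of $f$. *)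

theory Defs
  imports "HOL-Analysis.Analysis"
begin

text \<open>Points of C^n are modelled as functions nat => complex on the index set {..<n};
  coordinate z_j of the paper (1 <= j <= n) is z (j-1).\<close>

definition CV :: "nat \<Rightarrow> (nat \<Rightarrow> complex) measure" where
  "CV n = PiM {..<n} (\<lambda>_. lborel)"

definition rho :: "nat \<Rightarrow> (nat \<Rightarrow> complex) \<Rightarrow> real" where
  "rho n z = Im (z (n - 1)) - (\<Sum>j<n - 1. (Im (z j))\<^sup>2)"

definition TB :: "nat \<Rightarrow> (nat \<Rightarrow> complex) set" where
  "TB n = {z \<in> space (CV n). 0 < rho n z}"

definition rho2 :: "nat \<Rightarrow> (nat \<Rightarrow> complex) \<Rightarrow> (nat \<Rightarrow> complex) \<Rightarrow> complex" where
  "rho2 n z u = ((\<Sum>j<n - 1. (z j - cnj (u j))\<^sup>2) - 2 * \<i> * (z (n - 1) - cnj (u (n - 1)))) / 4"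

text \<open>Kernels of T and S; complex powers use the principal branch (complex powr).
  Vectors in R^2 are pairs: a = (a_1, a_2).\<close>
definition kernT :: "nat \<Rightarrow> real \<times> real \<Rightarrow> real \<times> real \<Rightarrow>
    (nat \<Rightarrow> complex) \<Rightarrow> (nat \<Rightarrow> complex) \<Rightarrow> (nat \<Rightarrow> complex) \<Rightarrow> (nat \<Rightarrow> complex) \<Rightarrow> complex" where
  "kernT n b c z w u \<eta> =
     of_real (rho n u powr fst b * rho n \<eta> powr snd b) /
     (rho2 n z u powr of_real (fst c) * rho2 n w \<eta> powr of_real (snd c))"

definition kernS :: "nat \<Rightarrow> real \<times> real \<Rightarrow> real \<times> real \<Rightarrow>
    (nat \<Rightarrow> complex) \<Rightarrow> (nat \<Rightarrow> complex) \<Rightarrow> (nat \<Rightarrow> complex) \<Rightarrow> (nat \<Rightarrow> complex) \<Rightarrow> complex" where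
  "kernS n b c z w u \<eta> =
     of_real (rho n u powr fst b * rho n \<eta> powr snd b /
       (cmod (rho2 n z u) powr fst c * cmod (rho2 n w \<eta>) powr snd c))"

definition int_op :: "nat \<Rightarrow> real \<times> real \<Rightarrow>
    ((nat \<Rightarrow> complex) \<Rightarrow> (nat \<Rightarrow> complex) \<Rightarrow> (nat \<Rightarrow> complex) \<Rightarrow> (nat \<Rightarrow> complex) \<Rightarrow> complex) \<Rightarrow>
    ((nat \<Rightarrow> complex) \<times> (nat \<Rightarrow> complex) \<Rightarrow> complex) \<Rightarrow>
    (nat \<Rightarrow> complex) \<times> (nat \<Rightarrow> complex) \<Rightarrow> complex" where
  "int_op n a K f = (\<lambda>(z, w). of_real (rho n z powr fst a * rho n w powr snd a) *
      set_lebesgue_integral (CV n \<Otimes>\<^sub>M CV n) (TB n \<times> TB n) (\<lambda>(u, \<eta>). K z w u \<eta> * f (u, \<eta>)))"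

definition mixnorm11 :: "nat \<Rightarrow> real \<times> real \<Rightarrow> ((nat \<Rightarrow> complex) \<times> (nat \<Rightarrow> complex) \<Rightarrow> complex) \<Rightarrow> ennreal" where
  "mixnorm11 n \<alpha> f =
     (\<integral>\<^sup>+ w. (\<integral>\<^sup>+ z. ennreal (indicator (TB n) z * cmod (f (z, w)) * rho n z powr fst \<alpha>) \<partial>CV n)
        * ennreal (indicator (TB n) w * rho n w powr snd \<alpha>) \<partial>CV n)"

text \<open>Boundedness from L^{(1,1)}_alpha to L^infty(T_B x T_B): for every f of finite norm the
  defining integral converges absolutely for a.e. (z,w) in T_B x T_B, and
  ||Kf||_infty <= C ||f||, the essential-sup bound being written as an a.e. bound.\<close>
definition bounded_11_inf :: "nat \<Rightarrow> real \<times> real \<Rightarrow> real \<times> real \<Rightarrow>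
    ((nat \<Rightarrow> complex) \<Rightarrow> (nat \<Rightarrow> complex) \<Rightarrow> (nat \<Rightarrow> complex) \<Rightarrow> (nat \<Rightarrow> complex) \<Rightarrow> complex) \<Rightarrow> bool" where
  "bounded_11_inf n \<alpha> a K \<longleftrightarrow>
     (\<exists>C::real. \<forall>f \<in> borel_measurable (CV n \<Otimes>\<^sub>M CV n). mixnorm11 n \<alpha> f < \<infinity> \<longrightarrow>
        (AE p in CV n \<Otimes>\<^sub>M CV n. p \<in> TB n \<times> TB n \<longrightarrow>
           set_integrable (CV n \<Otimes>\<^sub>M CV n) (TB n \<times> TB n)
             (\<lambda>(u, \<eta>). K (fst p) (snd p) u \<eta> * f (u, \<eta>))) \<and>
        (AE p in CV n \<Otimes>\<^sub>M CV n. p \<in> TB n \<times> TB n \<longrightarrow>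
           cmod (int_op n a K f p) \<le> C * enn2real (mixnorm11 n \<alpha> f)))"

end

theory Submission
  imports Defs "HOL-Complex_Analysis.Cauchy_Integral_Theorem"
begin

text \<open>
  The norm of L^(1,1)_\<alpha> is the L^1 norm with respect to the weight \<rho>(u)^\<alpha>1 \<rho>(\<eta>)^\<alpha>2.
  Hence an integral operator whose kernel K is continuous on T_B^4 maps it boundedly into
  L^\<infinity> exactly when \<rho>(z)^a1 \<rho>(w)^a2 |K(z,w,u,\<eta>)| \<le> C \<rho>(u)^\<alpha>1 \<rho>(\<eta>)^\<alpha>2:
  sufficiency is the trivial estimate of the integral; if the bound failed at one point, then
  after rotating the phase it would fail with some room on a product of small polydiscs, and
  testing the operator on the indicator of that product contradicts the L^\<infinity> bound.

  The kernels of S and T have the same modulus. At the points (0,...,0,it) one has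
  \<rho>(z,u) = (t+s)/2, so the pointwise bound specialises to t^a s^b \<le> C s^\<alpha> ((t+s)/2)^c
  for all t, s > 0; taking t = s forces c = a + b - \<alpha>, and letting t resp. s tend to 0 forces
  a \<ge> 0 and b \<ge> \<alpha>. Conversely, these conditions give the bound because
  |\<rho>(z,u)| \<ge> (\<rho>(z) + \<rho>(u))/2.
\<close>

lemma powr_unbounded:
  fixes d M :: real
  assumes "d \<noteq> 0"
  obtains t where "0 < t" "M < t powr d"
proof
  show "0 < (\<bar>M\<bar> + 1) powr (1 / d)" by simp
  show "M < ((\<bar>M\<bar> + 1) powr (1 / d)) powr d" using assms by (simp add: powr_powr)
qed

lemma powr_mult_div_mean_powr_le:
  fixes t s R a b \<alpha> :: real
  assumes t: "0 < t" and s: "0 < s" and R: "(t + s) / 2 \<le> R" and a: "0 \<le> a" and b: "\<alpha> \<le> b"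
  shows "t powr a * s powr b / R powr (a + b - \<alpha>) \<le> 2 powr (a + b - \<alpha>) * s powr \<alpha>"
proof -
  define c where "c = a + b - \<alpha>"
  have "t powr a * s powr (b - \<alpha>) \<le> (t + s) powr a * (t + s) powr (b - \<alpha>)"
    using t s a b by (intro mult_mono powr_mono2) auto
  also have "\<dots> = (t + s) powr c"
    unfolding c_def by (simp add: powr_add[symmetric] add_diff_eq)
  also have "\<dots> = 2 powr c * ((t + s) / 2) powr c"
    using powr_mult[of 2 "(t + s) / 2" c] t s by (simp add: add_divide_distrib)
  also have "\<dots> \<le> 2 powr c * R powr c"
    using t s R a b by (intro mult_left_mono powr_mono2) (auto simp: c_def)
  finally have "t powr a * s powr b \<le> 2 powr c * s powr \<alpha> * R powr c"
    using s by (simp add: powr_diff field_simps)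
  moreover have "0 < R" using t s R by simp
  ultimately show ?thesis unfolding c_def[symmetric] by (simp add: divide_le_eq)
qed

lemma nonneg_exponent_of_mean_bound:
  fixes e c C :: real
  assumes bound: "\<And>t. 0 < t \<Longrightarrow> t \<le> 1 \<Longrightarrow> t powr e \<le> C * ((t + 1) / 2) powr c"
  shows "0 \<le> e"
proof (rule ccontr)
  assume "\<not> 0 \<le> e"
  define M where "M = \<bar>C\<bar> * 2 powr \<bar>c\<bar> + 1"
  obtain t where t: "0 < t" "M < t powr e" using powr_unbounded[of e M] \<open>\<not> 0 \<le> e\<close> by auto
  have "t \<le> 1"
  proof (rule ccontr)
    assume "\<not> t \<le> 1"
    then have "1 \<le> t powr (- e)" using \<open>\<not> 0 \<le> e\<close> by (intro ge_one_powr_ge_zero) auto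
    then have "t powr e \<le> 1" using t(1) by (simp add: powr_minus field_simps)
    moreover have "1 \<le> M" unfolding M_def by simp
    ultimately show False using t(2) by simp
  qed
  have mean: "((t + 1) / 2) powr c \<le> 2 powr \<bar>c\<bar>"
  proof (cases "0 \<le> c")
    case True
    then have "((t + 1) / 2) powr c \<le> 1" using t(1) \<open>t \<le> 1\<close> by (intro powr_le1) auto
    then show ?thesis using ge_one_powr_ge_zero[of 2 "\<bar>c\<bar>"] by linarith
  next
    case False
    have "((t + 1) / 2) powr c = (2 / (t + 1)) powr (- c)"
      using t(1) by (simp add: powr_divide powr_minus field_simps)
    also have "\<dots> \<le> 2 powr (- c)" using t(1) False by (intro powr_mono2) (auto simp: field_simps)
    finally show ?thesis using False by simp
  qed
  have "t powr e \<le> \<bar>C\<bar> * ((t + 1) / 2) powr c"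
    using bound[OF t(1) \<open>t \<le> 1\<close>] by (smt (verit) abs_ge_self mult_right_mono powr_ge_zero)
  also have "\<dots> < M" unfolding M_def using mult_left_mono[OF mean, of "\<bar>C\<bar>"] by simp
  finally show False using t(2) by simp
qed

lemma exponents_of_mean_powr_bound:
  fixes a b c \<alpha> C :: real
  assumes bound: "\<And>t s. 0 < t \<Longrightarrow> 0 < s \<Longrightarrow> t powr a * s powr b / ((t + s) / 2) powr c \<le> C * s powr \<alpha>"
  shows "0 \<le> a \<and> \<alpha> \<le> b \<and> c = a + b - \<alpha>"
proof -
  have H: "t powr a * s powr (b - \<alpha>) \<le> C * ((t + s) / 2) powr c" if "0 < t" "0 < s" for t s
    using bound[OF that] that by (simp add: powr_diff field_simps)
  have "c = a + b - \<alpha>"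
  proof (rule ccontr)
    assume "c \<noteq> a + b - \<alpha>"
    then obtain t where t: "0 < t" "C < t powr (a + b - \<alpha> - c)"
      using powr_unbounded[of "a + b - \<alpha> - c" C] by auto
    have "t powr (a + b - \<alpha>) \<le> C * t powr c"
      using H[OF t(1) t(1)] by (simp add: powr_add[symmetric] add_diff_eq)
    moreover have "t powr (a + b - \<alpha> - c) = t powr (a + b - \<alpha>) / t powr c"
      by (rule powr_diff)
    ultimately have "C * t powr c < t powr (a + b - \<alpha>)"
      using t by (simp add: less_divide_eq)
    then show False using \<open>t powr (a + b - \<alpha>) \<le> C * t powr c\<close> by simp
  qed
  moreover have "0 \<le> a" using H[of _ 1] by (intro nonneg_exponent_of_mean_bound) simp
  moreover have "0 \<le> b - \<alpha>" using H[of 1] by (intro nonneg_exponent_of_mean_bound) (simp add: add.commute)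
  ultimately show ?thesis by simp
qed

lemma Re_cnj_sgn_mult: "Re (cnj (sgn k) * k) = cmod k"
proof (cases "k = 0")
  case False
  have "cnj (sgn k) * k = (k * cnj k) / of_real (cmod k)"
    by (simp add: sgn_eq mult.commute)
  also have "\<dots> = of_real ((cmod k)\<^sup>2) / of_real (cmod k)"
    by (simp only: complex_norm_square)
  finally have "cnj (sgn k) * k = of_real ((cmod k)\<^sup>2) / of_real (cmod k)" .
  then show ?thesis using False by (simp add: power2_eq_square)
qed simp

lemma isCont_tendsto_nhds: "isCont g x \<Longrightarrow> (g \<longlongrightarrow> g x) (nhds x)"
  unfolding isCont_def by (rule tendsto_at_iff_tendsto_nhds[THEN iffD1])

lemma borel_measurable_cnj: "cnj \<in> borel_measurable borel"
  by (rule borel_measurable_continuous_onI) (intro continuous_intros)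

lemma borel_measurable_powr_complex:
  assumes f: "f \<in> borel_measurable M"
  shows "(\<lambda>x. f x powr (c::complex)) \<in> borel_measurable M"
proof -
  have A: "f -` {0} \<inter> space M \<in> sets M" by (rule measurable_sets[OF f]) simp
  have "(\<lambda>x. if x \<in> f -` {0} then 0 else exp (c * ln (f x))) \<in> borel_measurable M"
    by (rule measurable_If_set[OF _ _ A]) (use f in measurable)
  then show ?thesis unfolding powr_def by simp
qed

lemma AE_witness_in_non_null_set:
  assumes "AE x in M. P x" "A \<in> sets M" "emeasure M A \<noteq> 0"
  obtains x where "x \<in> A" "P x"
proof -
  obtain N where N: "{x \<in> space M. \<not> P x} \<subseteq> N" "emeasure M N = 0" "N \<in> sets M"
    using assms(1) by (rule AE_E)
  have "\<not> A \<subseteq> N"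
    using emeasure_mono[of A N M] N(2,3) assms(3) by auto
  then obtain x where "x \<in> A" "x \<notin> N" by blast
  moreover have "x \<in> space M" using \<open>x \<in> A\<close> assms(2) sets.sets_into_space by blast
  ultimately show ?thesis using N(1) that by blast
qed

lemma integrable_and_norm_integral_le:
  fixes G :: "'a \<Rightarrow> 'b::{banach, second_countable_topology}"
  assumes G: "G \<in> borel_measurable M" and H: "integrable M H"
    and bound: "\<And>q. q \<in> space M \<Longrightarrow> norm (G q) \<le> H q"
  shows "integrable M G" and "norm (integral\<^sup>L M G) \<le> integral\<^sup>L M H"
proof -
  have "norm (G q) \<le> norm (H q)" if "q \<in> space M" for q
    using bound[OF that] by simp
  then show G_integrable: "integrable M G"
    by (intro Bochner_Integration.integrable_bound[OF H G]) auto
  show "norm (integral\<^sup>L M G) \<le> integral\<^sup>L M H"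
    using G_integrable H bound by (intro order_trans[OF integral_norm_bound integral_mono]) auto
qed

lemma norm_integral_gt_of_Re_lower_bound:
  fixes G :: "'a \<Rightarrow> complex" and h :: "'a \<Rightarrow> real"
  assumes G: "integrable M G" and h: "integrable M h"
    and E: "E \<in> sets M" "emeasure M E < \<infinity>" "emeasure M E \<noteq> 0"
    and "0 < \<delta>" "cmod \<theta> \<le> 1"
    and lower: "\<And>q. q \<in> space M \<Longrightarrow> C * h q + \<delta> * indicator E q \<le> Re (\<theta> * G q)"
  shows "C * integral\<^sup>L M h < cmod (integral\<^sup>L M G)"
proof -
  have E_integrable: "integrable M (indicator E :: _ \<Rightarrow> real)"
    using E by (intro integrable_real_indicator) auto
  have "0 < measure M E" using E by (simp add: measure_def enn2real_positive_iff zero_less_iff_neq_zero)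
  then have "C * integral\<^sup>L M h < C * integral\<^sup>L M h + \<delta> * measure M E" using \<open>0 < \<delta>\<close> by simp
  also have "\<dots> = integral\<^sup>L M (\<lambda>q. C * h q + \<delta> * indicator E q)"
    using h E_integrable E(1) by (simp add: Int_absorb2 sets.sets_into_space)
  also have "\<dots> \<le> integral\<^sup>L M (\<lambda>q. Re (\<theta> * G q))"
  proof (rule integral_mono[OF _ _ lower])
    show "integrable M (\<lambda>q. C * h q + \<delta> * indicator E q)" using h E_integrable by simp
    show "integrable M (\<lambda>q. Re (\<theta> * G q))" using G by (intro integrable_Re integrable_mult_right)
  qed
  also have "\<dots> = Re (integral\<^sup>L M (\<lambda>q. \<theta> * G q))"
    using G by (intro integral_Re integrable_mult_right)
  also have "\<dots> = Re (\<theta> * integral\<^sup>L M G)" by (simp only: integral_mult_right_zero)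
  also have "\<dots> \<le> cmod (\<theta> * integral\<^sup>L M G)" by (rule complex_Re_le_cmod)
  also have "\<dots> \<le> cmod (integral\<^sup>L M G)"
    using \<open>cmod \<theta> \<le> 1\<close> by (simp add: norm_mult mult_left_le_one_le)
  finally show ?thesis .
qed

section \<open>The measure space and the functions \<open>\<rho>\<close>\<close>

type_synonym cpoint = "nat \<Rightarrow> complex"

type_synonym kernel = "cpoint \<Rightarrow> cpoint \<Rightarrow> cpoint \<Rightarrow> cpoint \<Rightarrow> complex"

lemma sigma_finite_CV: "sigma_finite_measure (CV n)"
  unfolding CV_def
  by (rule product_sigma_finite.sigma_finite)
    (auto simp: product_sigma_finite_def intro: lborel.sigma_finite_measure_axioms)

lemma pair_sigma_finite_CV: "pair_sigma_finite (CV n) (CV n)"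
  using sigma_finite_CV by (simp add: pair_sigma_finite_def)

lemma space_CV: "space (CV n) = (\<Pi>\<^sub>E j\<in>{..<n}. UNIV)"
  unfolding CV_def by (simp add: space_PiM)

lemma measurable_coordinate_CV:
  assumes "j < n" "f \<in> measurable M (CV n)"
  shows "(\<lambda>x. f x j) \<in> borel_measurable M"
proof -
  have "(\<lambda>z. z j) \<in> borel_measurable (CV n)"
    unfolding CV_def using measurable_component_singleton[of j "{..<n}" "\<lambda>_. lborel"] assms by simp
  then show ?thesis using assms measurable_compose by blast
qed

lemma continuous_coordinate:
  fixes j :: nat
  assumes "continuous F h"
  shows "continuous F (\<lambda>y. h y j :: complex)"
proof -
  have "continuous_on UNIV (\<lambda>f::cpoint. f j)" by simp
  then have coord: "isCont (\<lambda>f::cpoint. f j) x" for x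
    using continuous_on_eq_continuous_at[OF open_UNIV] by blast
  show ?thesis
    unfolding continuous_def by (rule isCont_tendsto_compose[OF coord assms[unfolded continuous_def]])
qed

definition polydisc :: "nat \<Rightarrow> cpoint \<Rightarrow> real \<Rightarrow> cpoint set" where
  "polydisc n x r = (\<Pi>\<^sub>E j\<in>{..<n}. ball (x j) r)"

lemma polydisc_sets: "polydisc n x r \<in> sets (CV n)"
  unfolding CV_def polydisc_def by (rule sets_PiM_I_finite) auto

lemma emeasure_polydisc:
  assumes "0 < r"
  shows "emeasure (CV n) (polydisc n x r) = ennreal ((pi * r\<^sup>2) ^ n)"
proof -
  have "emeasure (CV n) (polydisc n x r) = (\<Prod>j<n. emeasure lborel (ball (x j) r))"
    unfolding CV_def polydisc_def
    by (rule product_sigma_finite.emeasure_PiM)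
      (auto simp: product_sigma_finite_def lborel.sigma_finite_measure_axioms)
  also have "\<dots> = (\<Prod>j<n. ennreal (pi * r\<^sup>2))"
    using assms by (simp add: emeasure_ball unit_ball_vol_def Gamma_numeral)
  finally show ?thesis using assms by (simp add: prod_ennreal ennreal_power)
qed

lemma emeasure_polydisc_Times:
  assumes "0 < r"
  shows "emeasure (CV n \<Otimes>\<^sub>M CV n) (polydisc n x r \<times> polydisc n y r) = ennreal ((pi * r\<^sup>2) ^ (2 * n))"
proof -
  interpret sigma_finite_measure "CV n" by (rule sigma_finite_CV)
  show ?thesis
    using assms by (simp add: emeasure_pair_measure_Times polydisc_sets emeasure_polydisc
        ennreal_mult'[symmetric] power_mult power2_eq_square power_mult_distrib)
qed

lemma center_in_polydisc: "x \<in> space (CV n) \<Longrightarrow> 0 < r \<Longrightarrow> x \<in> polydisc n x r"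
  by (auto simp: space_CV polydisc_def PiE_iff)

lemma eventually_nhds_polydisc:
  fixes x :: cpoint
  assumes "eventually Q (nhds x)" "x \<in> space (CV n)"
  obtains r where "0 < r" "\<And>y. y \<in> polydisc n x r \<Longrightarrow> Q y"
proof -
  obtain S where S: "open S" "x \<in> S" "\<forall>y\<in>S. Q y" using assms(1) unfolding eventually_nhds by blast
  have "openin (product_topology (\<lambda>i. euclidean) UNIV) S" using S(1) unfolding open_fun_def .
  from product_topology_open_contains_basis[OF this S(2)] obtain X where
    X: "x \<in> (\<Pi>\<^sub>E i\<in>UNIV. X i)" "\<forall>i. open (X i)" "(\<Pi>\<^sub>E i\<in>UNIV. X i) \<subseteq> S" by auto
  have "\<exists>e>0. ball (x i) e \<subseteq> X i" for i
  proof -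
    have "x i \<in> X i" using X(1) by (auto simp: PiE_iff)
    then show ?thesis using X(2) open_contains_ball by blast
  qed
  then obtain e where e: "\<And>i. 0 < e i" "\<And>i. ball (x i) (e i) \<subseteq> X i" by metis
  define r where "r = Min (insert 1 (e ` {..<n}))"
  show ?thesis
  proof
    show "0 < r" unfolding r_def using e(1) by auto
    fix y assume y: "y \<in> polydisc n x r"
    have "y i \<in> X i" for i
    proof (cases "i < n")
      case True
      then have "r \<le> e i" unfolding r_def by auto
      moreover have "dist (x i) (y i) < r" using y True by (auto simp: polydisc_def PiE_iff)
      ultimately show ?thesis using e(2)[of i] by auto
    next
      case False
      then have "y i = x i" using y assms(2) by (auto simp: polydisc_def space_CV PiE_iff extensional_def)
      then show ?thesis using X(1) by (auto simp: PiE_iff)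
    qed
    then show "Q y" using X(3) S(3) by auto
  qed
qed

lemma eventually_nhds_polydiscs:
  fixes z0 w0 u0 e0 :: cpoint
  assumes "eventually P (nhds ((z0, w0), (u0, e0)))"
    and "z0 \<in> space (CV n)" "w0 \<in> space (CV n)" "u0 \<in> space (CV n)" "e0 \<in> space (CV n)"
  obtains r where "0 < r" "\<And>z w u e. z \<in> polydisc n z0 r \<Longrightarrow> w \<in> polydisc n w0 r \<Longrightarrow>
    u \<in> polydisc n u0 r \<Longrightarrow> e \<in> polydisc n e0 r \<Longrightarrow> P ((z, w), (u, e))"
proof -
  from assms(1) have "eventually P ((nhds z0 \<times>\<^sub>F nhds w0) \<times>\<^sub>F (nhds u0 \<times>\<^sub>F nhds e0))"
    by (simp add: nhds_prod)
  then obtain PA PB where AB: "eventually PA (nhds z0 \<times>\<^sub>F nhds w0)" "eventually PB (nhds u0 \<times>\<^sub>F nhds e0)"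
    "\<forall>x y. PA x \<longrightarrow> PB y \<longrightarrow> P (x, y)" unfolding eventually_prod_filter by blast
  from AB(1) obtain Pz Pw where A: "eventually Pz (nhds z0)" "eventually Pw (nhds w0)"
    "\<forall>x y. Pz x \<longrightarrow> Pw y \<longrightarrow> PA (x, y)" unfolding eventually_prod_filter by blast
  from AB(2) obtain Pu Pe where B: "eventually Pu (nhds u0)" "eventually Pe (nhds e0)"
    "\<forall>x y. Pu x \<longrightarrow> Pe y \<longrightarrow> PB (x, y)" unfolding eventually_prod_filter by blast
  obtain rz where rz: "0 < rz" "\<And>y. y \<in> polydisc n z0 rz \<Longrightarrow> Pz y"
    using eventually_nhds_polydisc[OF A(1) assms(2)] by blast
  obtain rw where rw: "0 < rw" "\<And>y. y \<in> polydisc n w0 rw \<Longrightarrow> Pw y"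
    using eventually_nhds_polydisc[OF A(2) assms(3)] by blast
  obtain ru where ru: "0 < ru" "\<And>y. y \<in> polydisc n u0 ru \<Longrightarrow> Pu y"
    using eventually_nhds_polydisc[OF B(1) assms(4)] by blast
  obtain re where re: "0 < re" "\<And>y. y \<in> polydisc n e0 re \<Longrightarrow> Pe y"
    using eventually_nhds_polydisc[OF B(2) assms(5)] by blast
  define r where "r = min (min rz rw) (min ru re)"
  have shrink: "y \<in> polydisc n x \<rho>" if "y \<in> polydisc n x r" "r \<le> \<rho>" for x y \<rho>
    using that by (force simp: polydisc_def PiE_iff)
  show ?thesis
  proof
    show "0 < r" unfolding r_def using rz ru rw re by simp
    fix z w u e
    assume "z \<in> polydisc n z0 r" "w \<in> polydisc n w0 r" "u \<in> polydisc n u0 r" "e \<in> polydisc n e0 r"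
    moreover have "r \<le> rz" "r \<le> rw" "r \<le> ru" "r \<le> re" unfolding r_def by auto
    ultimately have "Pz z" "Pw w" "Pu u" "Pe e"
      using rz(2) rw(2) ru(2) re(2) shrink by blast+
    then show "P ((z, w), (u, e))" using A(3) B(3) AB(3) by blast
  qed
qed

lemma measurable_rho:
  "0 < n \<Longrightarrow> f \<in> measurable M (CV n) \<Longrightarrow> (\<lambda>x. rho n (f x)) \<in> borel_measurable M"
  unfolding rho_def
  by (intro borel_measurable_diff borel_measurable_sum borel_measurable_power
      borel_measurable_Im[THEN measurable_compose[rotated]] measurable_coordinate_CV) auto

lemma measurable_rho2:
  "0 < n \<Longrightarrow> f \<in> measurable M (CV n) \<Longrightarrow> g \<in> measurable M (CV n) \<Longrightarrow>
    (\<lambda>x. rho2 n (f x) (g x)) \<in> borel_measurable M"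
  unfolding rho2_def
  by (intro borel_measurable_divide borel_measurable_diff borel_measurable_sum borel_measurable_power
      borel_measurable_times borel_measurable_const
      borel_measurable_cnj[THEN measurable_compose[rotated]] measurable_coordinate_CV) auto

lemma sets_TB: "0 < n \<Longrightarrow> TB n \<in> sets (CV n)"
proof -
  assume "0 < n"
  then have "rho n \<in> borel_measurable (CV n)"
    using measurable_rho[OF _ measurable_ident_sets[OF refl]] by simp
  then show ?thesis unfolding TB_def by measurable
qed

lemma continuous_rho [continuous_intros]:
  assumes "continuous F h"
  shows "continuous F (\<lambda>y. rho n (h y))"
proof -
  have hj: "\<And>j. continuous F (\<lambda>y. h y j)" using assms by (rule continuous_coordinate)
  show ?thesis unfolding rho_def by (intro continuous_intros continuous_Im hj)
qed

lemma continuous_rho2 [continuous_intros]: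
  assumes "continuous F h" "continuous F g"
  shows "continuous F (\<lambda>y. rho2 n (h y) (g y))"
proof -
  have hj: "\<And>j. continuous F (\<lambda>y. h y j)" "\<And>j. continuous F (\<lambda>y. g y j)"
    using assms by (auto intro: continuous_coordinate)
  have "continuous F (\<lambda>y. ((\<Sum>j<n - 1. (h y j - cnj (g y j))\<^sup>2)
      - 2 * \<i> * (h y (n - 1) - cnj (g y (n - 1)))) * (1 / 4))"
    by (intro continuous_intros continuous_cnj hj)
  then show ?thesis unfolding rho2_def by simp
qed

lemma Re_rho2:
  "Re (rho2 n z u) = ((\<Sum>j<n - 1. (Re (z j) - Re (u j))\<^sup>2 - (Im (z j) + Im (u j))\<^sup>2)
      + 2 * (Im (z (n - 1)) + Im (u (n - 1)))) / 4"
  by (simp add: rho2_def Re_sum power2_eq_square algebra_simps)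

lemma Re_rho2_ge_mean: "(rho n z + rho n u) / 2 \<le> Re (rho2 n z u)"
proof -
  have "(\<Sum>j<n - 1. - 2 * (Im (z j))\<^sup>2 - 2 * (Im (u j))\<^sup>2)
      \<le> (\<Sum>j<n - 1. (Re (z j) - Re (u j))\<^sup>2 - (Im (z j) + Im (u j))\<^sup>2)"
  proof (rule sum_mono)
    fix j
    have "(Im (z j) + Im (u j))\<^sup>2 \<le> 2 * (Im (z j))\<^sup>2 + 2 * (Im (u j))\<^sup>2"
      using zero_le_power2[of "Im (z j) - Im (u j)"] by (simp add: power2_eq_square algebra_simps)
    then show "- 2 * (Im (z j))\<^sup>2 - 2 * (Im (u j))\<^sup>2 \<le> (Re (z j) - Re (u j))\<^sup>2 - (Im (z j) + Im (u j))\<^sup>2"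
      using zero_le_power2[of "Re (z j) - Re (u j)"] by linarith
  qed
  also have "(\<Sum>j<n - 1. - 2 * (Im (z j))\<^sup>2 - 2 * (Im (u j))\<^sup>2)
      = - 2 * (\<Sum>j<n - 1. (Im (z j))\<^sup>2) - 2 * (\<Sum>j<n - 1. (Im (u j))\<^sup>2)"
    by (simp add: sum_subtractf sum_distrib_left)
  finally show ?thesis unfolding Re_rho2 rho_def by simp
qed

lemma norm_rho2_ge_mean: "(rho n z + rho n u) / 2 \<le> cmod (rho2 n z u)"
  using Re_rho2_ge_mean complex_Re_le_cmod order_trans by blast

lemma Re_rho2_pos: "z \<in> TB n \<Longrightarrow> u \<in> TB n \<Longrightarrow> 0 < Re (rho2 n z u)"
  using Re_rho2_ge_mean[of n z u] by (auto simp: TB_def)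

lemma rho2_not_nonpos_Reals: "z \<in> TB n \<Longrightarrow> u \<in> TB n \<Longrightarrow> rho2 n z u \<notin> \<real>\<^sub>\<le>\<^sub>0"
  using Re_rho2_pos by (fastforce simp: complex_nonpos_Reals_iff)

lemma rho2_nonzero: "z \<in> TB n \<Longrightarrow> u \<in> TB n \<Longrightarrow> rho2 n z u \<noteq> 0"
  using Re_rho2_pos by fastforce

\<comment> \<open>the point (0,...,0,it), made \<open>undefined\<close> off \<open>{..<n}\<close> so that it lies in \<open>space (CV n)\<close>\<close>
definition axis_point :: "nat \<Rightarrow> real \<Rightarrow> cpoint" where
  "axis_point n t = (\<lambda>j. if j = n - 1 then Complex 0 t else if j < n then 0 else undefined)"

lemma rho_axis_point: "0 < n \<Longrightarrow> rho n (axis_point n t) = t"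
  by (auto simp: rho_def axis_point_def intro!: sum.neutral)

lemma axis_point_TB: "0 < n \<Longrightarrow> 0 < t \<Longrightarrow> axis_point n t \<in> TB n"
  unfolding TB_def
  by (simp add: rho_axis_point space_CV PiE_iff extensional_def) (auto simp: axis_point_def)

lemma rho2_axis_point: "0 < n \<Longrightarrow> rho2 n (axis_point n t) (axis_point n s) = of_real ((t + s) / 2)"
  by (simp add: rho2_def axis_point_def complex_eq_iff)

definition rho_weight :: "nat \<Rightarrow> real \<times> real \<Rightarrow> cpoint \<times> cpoint \<Rightarrow> real" where
  "rho_weight n a p = rho n (fst p) powr fst a * rho n (snd p) powr snd a"

lemma rho_weight_nonneg [simp]: "0 \<le> rho_weight n a p"
  by (simp add: rho_weight_def)

lemma rho_weight_pos: "z \<in> TB n \<Longrightarrow> w \<in> TB n \<Longrightarrow> 0 < rho_weight n a (z, w)"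
  by (simp add: rho_weight_def TB_def)

lemma measurable_rho_weight:
  "0 < n \<Longrightarrow> rho_weight n a \<in> borel_measurable (CV n \<Otimes>\<^sub>M CV n)"
  unfolding rho_weight_def
  by (intro borel_measurable_times powr_real_measurable measurable_rho borel_measurable_const
      measurable_fst measurable_snd)

lemma isCont_rho_weight:
  assumes "isCont f x" "fst (f x) \<in> TB n" "snd (f x) \<in> TB n"
  shows "isCont (\<lambda>y. rho_weight n a (f y)) x"
  unfolding rho_weight_def using assms by (intro continuous_intros) (auto simp: TB_def)

section \<open>Boundedness as a pointwise bound on the kernel\<close>

lemma mixnorm11_eq_nn_integral:
  assumes n: "0 < n" and f: "f \<in> borel_measurable (CV n \<Otimes>\<^sub>M CV n)"
  shows "mixnorm11 n \<alpha> f =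
    (\<integral>\<^sup>+ q. ennreal (indicator (TB n \<times> TB n) q * cmod (f q) * rho_weight n \<alpha> q) \<partial>(CV n \<Otimes>\<^sub>M CV n))"
proof -
  interpret pair_sigma_finite "CV n" "CV n" by (rule pair_sigma_finite_CV)
  define H where "H q = indicator (TB n \<times> TB n) q * cmod (f q) * rho_weight n \<alpha> q" for q
  have [measurable]: "TB n \<in> sets (CV n)" "rho_weight n \<alpha> \<in> borel_measurable (CV n \<Otimes>\<^sub>M CV n)"
    using n by (rule sets_TB, rule measurable_rho_weight)
  have H: "H \<in> borel_measurable (CV n \<Otimes>\<^sub>M CV n)" unfolding H_def using f by measurable
  have "(\<integral>\<^sup>+ z. ennreal (indicator (TB n) z * cmod (f (z, w)) * rho n z powr fst \<alpha>) \<partial>CV n)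
        * ennreal (indicator (TB n) w * rho n w powr snd \<alpha>) = (\<integral>\<^sup>+ z. ennreal (H (z, w)) \<partial>CV n)"
    if w: "w \<in> space (CV n)" for w
  proof -
    have [measurable]: "(\<lambda>z. f (z, w)) \<in> borel_measurable (CV n)" by (rule measurable_Pair1[OF f w])
    have [measurable]: "(\<lambda>z. rho n z) \<in> borel_measurable (CV n)"
      using n by (rule measurable_rho) simp
    have "(\<integral>\<^sup>+ z. ennreal (indicator (TB n) z * cmod (f (z, w)) * rho n z powr fst \<alpha>) \<partial>CV n)
        * ennreal (indicator (TB n) w * rho n w powr snd \<alpha>)
      = (\<integral>\<^sup>+ z. ennreal (indicator (TB n) z * cmod (f (z, w)) * rho n z powr fst \<alpha>)
          * ennreal (indicator (TB n) w * rho n w powr snd \<alpha>) \<partial>CV n)"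
      by (rule nn_integral_multc[symmetric]) measurable
    also have "\<dots> = (\<integral>\<^sup>+ z. ennreal (H (z, w)) \<partial>CV n)"
      by (intro nn_integral_cong)
        (simp add: ennreal_mult''[symmetric] H_def rho_weight_def indicator_def)
    finally show ?thesis .
  qed
  then have "mixnorm11 n \<alpha> f = (\<integral>\<^sup>+ w. (\<integral>\<^sup>+ z. ennreal (H (z, w)) \<partial>CV n) \<partial>CV n)"
    unfolding mixnorm11_def by (intro nn_integral_cong) simp
  also have "\<dots> = (\<integral>\<^sup>+ q. ennreal (H q) \<partial>(CV n \<Otimes>\<^sub>M CV n))"
    using H by (intro nn_integral_snd) measurable
  finally show ?thesis unfolding H_def .
qed

lemma mixnorm11_indicator:
  assumes n: "0 < n" and E: "E \<in> sets (CV n \<Otimes>\<^sub>M CV n)" "E \<subseteq> TB n \<times> TB n"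
    "emeasure (CV n \<Otimes>\<^sub>M CV n) E < \<infinity>"
    and bounded: "\<And>q. q \<in> E \<Longrightarrow> rho_weight n \<alpha> q \<le> L"
  defines "h \<equiv> \<lambda>q. indicator E q * rho_weight n \<alpha> q"
  shows "mixnorm11 n \<alpha> (indicator E :: _ \<Rightarrow> complex) < \<infinity>"
    and "integrable (CV n \<Otimes>\<^sub>M CV n) h"
    and "enn2real (mixnorm11 n \<alpha> (indicator E :: _ \<Rightarrow> complex)) = integral\<^sup>L (CV n \<Otimes>\<^sub>M CV n) h"
proof -
  let ?M = "CV n \<Otimes>\<^sub>M CV n"
  have h_measurable: "h \<in> borel_measurable ?M"
    unfolding h_def using E(1) measurable_rho_weight[OF n] by measurable
  have "mixnorm11 n \<alpha> (indicator E :: _ \<Rightarrow> complex) = (\<integral>\<^sup>+ q. ennreal (h q) \<partial>?M)"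
    unfolding mixnorm11_eq_nn_integral[OF n borel_measurable_indicator[OF E(1)]] using E(2)
    by (intro nn_integral_cong) (auto simp: h_def indicator_def)
  moreover have "(\<integral>\<^sup>+ q. ennreal (h q) \<partial>?M) \<le> (\<integral>\<^sup>+ q. ennreal L * indicator E q \<partial>?M)"
    using bounded by (intro nn_integral_mono) (auto simp: h_def indicator_def ennreal_leI)
  moreover have "(\<integral>\<^sup>+ q. ennreal L * indicator E q \<partial>?M) < \<infinity>"
    using E(1,3) by (simp add: nn_integral_cmult_indicator ennreal_mult_less_top)
  moreover have "0 \<le> h q" for q by (simp add: h_def)
  ultimately show "mixnorm11 n \<alpha> (indicator E :: _ \<Rightarrow> complex) < \<infinity>" "integrable ?M h"
    "enn2real (mixnorm11 n \<alpha> (indicator E :: _ \<Rightarrow> complex)) = integral\<^sup>L ?M h"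
    using h_measurable by (auto intro!: integrableI_nonneg integral_eq_nn_integral[symmetric])
qed

lemma int_op_eq:
  "int_op n a K f (z, w) = of_real (rho_weight n a (z, w)) *
    set_lebesgue_integral (CV n \<Otimes>\<^sub>M CV n) (TB n \<times> TB n) (\<lambda>(u, \<eta>). K z w u \<eta> * f (u, \<eta>))"
  by (simp add: int_op_def rho_weight_def)

definition bounded_11_inf_by :: "nat \<Rightarrow> real \<times> real \<Rightarrow> real \<times> real \<Rightarrow> kernel \<Rightarrow> real \<Rightarrow> bool" where
  "bounded_11_inf_by n \<alpha> a K C \<longleftrightarrow>
     (\<forall>f \<in> borel_measurable (CV n \<Otimes>\<^sub>M CV n). mixnorm11 n \<alpha> f < \<infinity> \<longrightarrow>
        (AE p in CV n \<Otimes>\<^sub>M CV n. p \<in> TB n \<times> TB n \<longrightarrow>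
           set_integrable (CV n \<Otimes>\<^sub>M CV n) (TB n \<times> TB n)
             (\<lambda>(u, \<eta>). K (fst p) (snd p) u \<eta> * f (u, \<eta>))) \<and>
        (AE p in CV n \<Otimes>\<^sub>M CV n. p \<in> TB n \<times> TB n \<longrightarrow>
           cmod (int_op n a K f p) \<le> C * enn2real (mixnorm11 n \<alpha> f)))"

lemma bounded_11_inf_iff_ex_bounded_11_inf_by:
  "bounded_11_inf n \<alpha> a K \<longleftrightarrow> (\<exists>C. bounded_11_inf_by n \<alpha> a K C)"
  unfolding bounded_11_inf_def bounded_11_inf_by_def ..

definition kernel_bound :: "nat \<Rightarrow> real \<times> real \<Rightarrow> real \<times> real \<Rightarrow> kernel \<Rightarrow> real \<Rightarrow> bool" where
  "kernel_bound n \<alpha> a K C \<longleftrightarrow>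
     (\<forall>z\<in>TB n. \<forall>w\<in>TB n. \<forall>u\<in>TB n. \<forall>e\<in>TB n.
        rho_weight n a (z, w) * cmod (K z w u e) \<le> C * rho_weight n \<alpha> (u, e))"

lemma int_op_bound_of_kernel_bound:
  fixes K :: kernel
  assumes K_measurable: "(\<lambda>q. K z w (fst q) (snd q)) \<in> borel_measurable (CV n \<Otimes>\<^sub>M CV n)"
    and bound: "kernel_bound n \<alpha> a K C" and zw: "z \<in> TB n" "w \<in> TB n"
    and f: "f \<in> borel_measurable (CV n \<Otimes>\<^sub>M CV n)" and "TB n \<in> sets (CV n)"
    and H: "integrable (CV n \<Otimes>\<^sub>M CV n) (\<lambda>q. indicator (TB n \<times> TB n) q * cmod (f q) * rho_weight n \<alpha> q)"
  shows "set_integrable (CV n \<Otimes>\<^sub>M CV n) (TB n \<times> TB n) (\<lambda>(u, \<eta>). K z w u \<eta> * f (u, \<eta>))"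
    and "cmod (int_op n a K f (z, w)) \<le>
      C * integral\<^sup>L (CV n \<Otimes>\<^sub>M CV n) (\<lambda>q. indicator (TB n \<times> TB n) q * cmod (f q) * rho_weight n \<alpha> q)"
proof -
  let ?M = "CV n \<Otimes>\<^sub>M CV n"
  define H where "H q = indicator (TB n \<times> TB n) q * cmod (f q) * rho_weight n \<alpha> q" for q
  define A where "A = rho_weight n a (z, w)"
  have A: "0 < A" unfolding A_def using zw by (rule rho_weight_pos)
  define G where "G q = indicator (TB n \<times> TB n) q *\<^sub>R (case q of (u, \<eta>) \<Rightarrow> K z w u \<eta> * f (u, \<eta>))" for q
  have G_measurable: "G \<in> borel_measurable ?M"
    unfolding G_def case_prod_beta using f K_measurable \<open>TB n \<in> sets (CV n)\<close> by measurable
  have G_bound: "norm (G q) \<le> C / A * H q" for q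
  proof (cases "q \<in> TB n \<times> TB n")
    case True
    then obtain u e where q: "q = (u, e)" "u \<in> TB n" "e \<in> TB n" by auto
    have "A * cmod (K z w u e) \<le> C * rho_weight n \<alpha> (u, e)"
      using bound zw q unfolding kernel_bound_def A_def by blast
    then have "cmod (K z w u e) * cmod (f q) \<le> C / A * rho_weight n \<alpha> (u, e) * cmod (f q)"
      using A by (intro mult_right_mono) (auto simp: field_simps)
    then show ?thesis using q by (simp add: G_def H_def norm_mult ac_simps)
  qed (simp add: G_def H_def)
  have "integrable ?M (\<lambda>q. C / A * H q)" using H by (simp add: H_def)
  from integrable_and_norm_integral_le[OF G_measurable this G_bound]
  have G_integrable: "integrable ?M G"
    and G_integral: "norm (integral\<^sup>L ?M G) \<le> integral\<^sup>L ?M (\<lambda>q. C / A * H q)" by blast+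
  then show "set_integrable ?M (TB n \<times> TB n) (\<lambda>(u, \<eta>). K z w u \<eta> * f (u, \<eta>))"
    unfolding set_integrable_def G_def by blast
  have "cmod (int_op n a K f (z, w)) = A * cmod (integral\<^sup>L ?M G)"
    unfolding int_op_eq set_lebesgue_integral_def G_def A_def by (simp add: norm_mult)
  also have "\<dots> \<le> C * integral\<^sup>L ?M H"
    using mult_left_mono[OF G_integral, of A] A by simp
  finally show "cmod (int_op n a K f (z, w)) \<le> C * integral\<^sup>L ?M (\<lambda>q. indicator (TB n \<times> TB n) q * cmod (f q) * rho_weight n \<alpha> q)"
    unfolding H_def .
qed

lemma kernel_bound_imp_bounded_11_inf:
  fixes K :: kernel
  assumes n: "0 < n"
    and K_measurable: "\<And>z w. z \<in> space (CV n) \<Longrightarrow> w \<in> space (CV n) \<Longrightarrow>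
      (\<lambda>q. K z w (fst q) (snd q)) \<in> borel_measurable (CV n \<Otimes>\<^sub>M CV n)"
    and bound: "kernel_bound n \<alpha> a K C"
  shows "bounded_11_inf_by n \<alpha> a K C"
  unfolding bounded_11_inf_by_def
proof (intro ballI impI)
  let ?M = "CV n \<Otimes>\<^sub>M CV n"
  fix f assume f: "f \<in> borel_measurable ?M" and fin: "mixnorm11 n \<alpha> f < \<infinity>"
  define H where "H q = indicator (TB n \<times> TB n) q * cmod (f q) * rho_weight n \<alpha> q" for q
  have TB: "TB n \<in> sets (CV n)" using n by (rule sets_TB)
  have [measurable]: "rho_weight n \<alpha> \<in> borel_measurable ?M" using n by (rule measurable_rho_weight)
  have H_measurable: "H \<in> borel_measurable ?M" unfolding H_def using f TB by measurable
  have H_nonneg: "0 \<le> H q" for q unfolding H_def by simp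
  have mixnorm_H: "mixnorm11 n \<alpha> f = (\<integral>\<^sup>+ q. ennreal (H q) \<partial>?M)"
    unfolding H_def by (rule mixnorm11_eq_nn_integral[OF n f])
  have H_integrable: "integrable ?M H"
    using fin H_nonneg mixnorm_H by (intro integrableI_nonneg[OF H_measurable]) auto
  have "enn2real (mixnorm11 n \<alpha> f) = integral\<^sup>L ?M H"
    unfolding mixnorm_H using H_measurable H_nonneg by (intro integral_eq_nn_integral[symmetric]) auto
  moreover have "set_integrable ?M (TB n \<times> TB n) (\<lambda>(u, \<eta>). K z w u \<eta> * f (u, \<eta>)) \<and>
      cmod (int_op n a K f (z, w)) \<le> C * integral\<^sup>L ?M H" if "z \<in> TB n" "w \<in> TB n" for z w
  proof -
    have "(\<lambda>q. K z w (fst q) (snd q)) \<in> borel_measurable ?M"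
      using that by (intro K_measurable) (auto simp: TB_def)
    from int_op_bound_of_kernel_bound[OF this bound that f TB H_integrable[unfolded H_def[abs_def]]]
    show ?thesis unfolding H_def[abs_def] by blast
  qed
  ultimately show "(AE p in ?M. p \<in> TB n \<times> TB n \<longrightarrow>
        set_integrable ?M (TB n \<times> TB n) (\<lambda>(u, \<eta>). K (fst p) (snd p) u \<eta> * f (u, \<eta>))) \<and>
      (AE p in ?M. p \<in> TB n \<times> TB n \<longrightarrow> cmod (int_op n a K f p) \<le> C * enn2real (mixnorm11 n \<alpha> f))"
    by auto
qed

lemma kernel_large_near_point:
  fixes K :: kernel
  assumes cont: "isCont (\<lambda>x. K (fst (fst x)) (snd (fst x)) (fst (snd x)) (snd (snd x))) ((z0, w0), (u0, e0))"
    and TB: "z0 \<in> TB n" "w0 \<in> TB n" "u0 \<in> TB n" "e0 \<in> TB n"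
    and large: "C * rho_weight n \<alpha> (u0, e0) < rho_weight n a (z0, w0) * cmod (K z0 w0 u0 e0)"
  obtains r \<delta> \<theta> where "0 < r" "0 < \<delta>" "cmod \<theta> \<le> 1"
    "\<And>z w u e. z \<in> polydisc n z0 r \<Longrightarrow> w \<in> polydisc n w0 r \<Longrightarrow>
      u \<in> polydisc n u0 r \<Longrightarrow> e \<in> polydisc n e0 r \<Longrightarrow>
      z \<in> TB n \<and> w \<in> TB n \<and> u \<in> TB n \<and> e \<in> TB n \<and>
      rho_weight n \<alpha> (u, e) < rho_weight n \<alpha> (u0, e0) + 1 \<and>
      C * rho_weight n \<alpha> (u, e) + \<delta> < Re (\<theta> * (rho_weight n a (z, w) * K z w u e))"
proof -
  let ?x0 = "((z0, w0), (u0, e0))"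
  define k0 where "k0 = rho_weight n a (z0, w0) * K z0 w0 u0 e0"
  define \<theta> where "\<theta> = cnj (sgn k0)"
  define \<delta> where "\<delta> = (cmod k0 - C * rho_weight n \<alpha> (u0, e0)) / 2"
  define \<Phi> where "\<Phi> x = Re (\<theta> * (rho_weight n a (fst x) * K (fst (fst x)) (snd (fst x)) (fst (snd x)) (snd (snd x))))
      - C * rho_weight n \<alpha> (snd x)" for x
  have \<theta>: "cmod \<theta> \<le> 1" unfolding \<theta>_def by (simp add: norm_sgn)
  have "cmod k0 = rho_weight n a (z0, w0) * cmod (K z0 w0 u0 e0)"
    unfolding k0_def by (simp add: norm_mult)
  then have \<delta>: "0 < \<delta>" "\<Phi> ?x0 = 2 * \<delta>"
    using large Re_cnj_sgn_mult[of k0] by (simp_all add: \<delta>_def \<Phi>_def \<theta>_def k0_def)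
  have rho: "isCont (\<lambda>x. rho n (fst (fst x))) ?x0" "isCont (\<lambda>x. rho n (snd (fst x))) ?x0"
      "isCont (\<lambda>x. rho n (fst (snd x))) ?x0" "isCont (\<lambda>x. rho n (snd (snd x))) ?x0"
    by (intro continuous_intros)+
  have weights: "isCont (\<lambda>x. rho_weight n a (fst x)) ?x0" "isCont (\<lambda>x. rho_weight n \<alpha> (snd x)) ?x0"
    using TB by (intro isCont_rho_weight continuous_intros; simp)+
  have "isCont \<Phi> ?x0"
    unfolding \<Phi>_def using weights cont by (intro continuous_intros continuous_Re) auto
  then have "eventually (\<lambda>x. 0 < rho n (fst (fst x)) \<and> 0 < rho n (snd (fst x)) \<and>
      0 < rho n (fst (snd x)) \<and> 0 < rho n (snd (snd x)) \<and>
      rho_weight n \<alpha> (snd x) < rho_weight n \<alpha> (u0, e0) + 1 \<and> \<delta> < \<Phi> x) (nhds ?x0)"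
    using rho weights TB \<delta> \<open>isCont \<Phi> ?x0\<close>
    by (intro eventually_conj order_tendstoD[OF isCont_tendsto_nhds]) (auto simp: TB_def)
  then obtain r where r: "0 < r" "\<And>z w u e. z \<in> polydisc n z0 r \<Longrightarrow> w \<in> polydisc n w0 r \<Longrightarrow>
      u \<in> polydisc n u0 r \<Longrightarrow> e \<in> polydisc n e0 r \<Longrightarrow>
      0 < rho n z \<and> 0 < rho n w \<and> 0 < rho n u \<and> 0 < rho n e \<and>
      rho_weight n \<alpha> (u, e) < rho_weight n \<alpha> (u0, e0) + 1 \<and> \<delta> < \<Phi> ((z, w), (u, e))"
    using TB by (elim eventually_nhds_polydiscs) (auto simp: TB_def)
  have "polydisc n x r \<subseteq> space (CV n)" for x by (auto simp: polydisc_def space_CV)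
  with r \<delta> \<theta> show ?thesis
    by (intro that[of r \<delta> \<theta>]) (fastforce simp: TB_def \<Phi>_def)+
qed

lemma norm_int_op_indicator_gt:
  fixes K :: kernel
  assumes E: "E \<in> sets (CV n \<Otimes>\<^sub>M CV n)" "E \<subseteq> TB n \<times> TB n"
    "emeasure (CV n \<Otimes>\<^sub>M CV n) E < \<infinity>" "emeasure (CV n \<Otimes>\<^sub>M CV n) E \<noteq> 0"
    and "0 < \<delta>" "cmod \<theta> \<le> 1"
    and integrable: "set_integrable (CV n \<Otimes>\<^sub>M CV n) (TB n \<times> TB n)
      (\<lambda>(u, \<eta>). K z w u \<eta> * indicator E (u, \<eta>))"
    and h: "integrable (CV n \<Otimes>\<^sub>M CV n) (\<lambda>q. indicator E q * rho_weight n \<alpha> q)"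
    and large: "\<And>u e. (u, e) \<in> E \<Longrightarrow>
      C * rho_weight n \<alpha> (u, e) + \<delta> < Re (\<theta> * (rho_weight n a (z, w) * K z w u e))"
  shows "C * integral\<^sup>L (CV n \<Otimes>\<^sub>M CV n) (\<lambda>q. indicator E q * rho_weight n \<alpha> q)
    < cmod (int_op n a K (indicator E) (z, w))"
proof -
  let ?M = "CV n \<Otimes>\<^sub>M CV n"
  define G where "G q = rho_weight n a (z, w) *
    (indicator (TB n \<times> TB n) q *\<^sub>R (case q of (u, \<eta>) \<Rightarrow> K z w u \<eta> * indicator E (u, \<eta>)))" for q
  have G_integrable: "integrable ?M G"
    using integrable unfolding set_integrable_def G_def by (rule integrable_mult_right)
  have "int_op n a K (indicator E) (z, w) = integral\<^sup>L ?M G"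
    unfolding int_op_eq set_lebesgue_integral_def G_def by (rule integral_mult_right_zero[symmetric])
  moreover have "C * (indicator E q * rho_weight n \<alpha> q) + \<delta> * indicator E q \<le> Re (\<theta> * G q)" for q
  proof (cases "q \<in> E")
    case True
    obtain u e where "q = (u, e)" by (cases q)
    with True large[of u e] E(2) show ?thesis by (auto simp: G_def)
  qed (auto simp: G_def indicator_def split: prod.splits)
  ultimately show ?thesis
    using norm_integral_gt_of_Re_lower_bound[OF G_integrable h E(1,3,4) \<open>0 < \<delta>\<close> \<open>cmod \<theta> \<le> 1\<close>] by simp
qed

lemma kernel_bound_at_point:
  fixes K :: kernel
  assumes n: "0 < n" and bounded: "bounded_11_inf_by n \<alpha> a K C"
    and cont: "isCont (\<lambda>x. K (fst (fst x)) (snd (fst x)) (fst (snd x)) (snd (snd x))) ((z0, w0), (u0, e0))"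
    and TB: "z0 \<in> TB n" "w0 \<in> TB n" "u0 \<in> TB n" "e0 \<in> TB n"
  shows "rho_weight n a (z0, w0) * cmod (K z0 w0 u0 e0) \<le> C * rho_weight n \<alpha> (u0, e0)"
proof (rule ccontr)
  let ?M = "CV n \<Otimes>\<^sub>M CV n"
  assume "\<not> ?thesis"
  then obtain r \<delta> \<theta> where r: "0 < r" "0 < \<delta>" "cmod \<theta> \<le> 1"
    and large: "\<And>z w u e. z \<in> polydisc n z0 r \<Longrightarrow> w \<in> polydisc n w0 r \<Longrightarrow>
      u \<in> polydisc n u0 r \<Longrightarrow> e \<in> polydisc n e0 r \<Longrightarrow>
      z \<in> TB n \<and> w \<in> TB n \<and> u \<in> TB n \<and> e \<in> TB n \<and>
      rho_weight n \<alpha> (u, e) < rho_weight n \<alpha> (u0, e0) + 1 \<and>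
      C * rho_weight n \<alpha> (u, e) + \<delta> < Re (\<theta> * (rho_weight n a (z, w) * K z w u e))"
    using kernel_large_near_point[OF cont TB] by (metis not_le)
  define Z W U V where "Z = polydisc n z0 r" and "W = polydisc n w0 r"
    and "U = polydisc n u0 r" and "V = polydisc n e0 r"
  have centers: "z0 \<in> Z" "w0 \<in> W" "u0 \<in> U" "e0 \<in> V"
    unfolding Z_def W_def U_def V_def using TB r by (auto simp: TB_def intro: center_in_polydisc)
  have UV_TB: "U \<times> V \<subseteq> TB n \<times> TB n" using large centers by (auto simp: Z_def W_def U_def V_def)
  have UV: "U \<times> V \<in> sets ?M" "emeasure ?M (U \<times> V) < \<infinity>" "emeasure ?M (U \<times> V) \<noteq> 0"
    and ZW: "Z \<times> W \<in> sets ?M" "emeasure ?M (Z \<times> W) \<noteq> 0"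
    unfolding Z_def W_def U_def V_def using r by (simp_all add: polydisc_sets emeasure_polydisc_Times)
  define f :: "cpoint \<times> cpoint \<Rightarrow> complex" where "f = indicator (U \<times> V)"
  define h where "h = (\<lambda>q. indicator (U \<times> V) q * rho_weight n \<alpha> q)"
  have "rho_weight n \<alpha> q \<le> rho_weight n \<alpha> (u0, e0) + 1" if "q \<in> U \<times> V" for q
    using that large[of z0 w0] centers by (force simp: Z_def W_def U_def V_def)
  then have mixnorm_fin: "mixnorm11 n \<alpha> f < \<infinity>" and h_integrable: "integrable ?M h"
    and mixnorm_h: "enn2real (mixnorm11 n \<alpha> f) = integral\<^sup>L ?M h"
    unfolding f_def h_def using mixnorm11_indicator[OF n UV(1) UV_TB UV(2)] by blast+
  have f_measurable: "f \<in> borel_measurable ?M" unfolding f_def using UV(1) by measurable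
  have "AE p in ?M. p \<in> TB n \<times> TB n \<longrightarrow>
      set_integrable ?M (TB n \<times> TB n) (\<lambda>(u, \<eta>). K (fst p) (snd p) u \<eta> * f (u, \<eta>)) \<and>
      cmod (int_op n a K f p) \<le> C * enn2real (mixnorm11 n \<alpha> f)"
    using bounded f_measurable mixnorm_fin unfolding bounded_11_inf_by_def by auto
  then obtain p where p: "p \<in> Z \<times> W" and p_good: "p \<in> TB n \<times> TB n \<longrightarrow>
      set_integrable ?M (TB n \<times> TB n) (\<lambda>(u, \<eta>). K (fst p) (snd p) u \<eta> * f (u, \<eta>)) \<and>
      cmod (int_op n a K f p) \<le> C * enn2real (mixnorm11 n \<alpha> f)"
    using ZW by (rule AE_witness_in_non_null_set)
  then obtain z w where zw: "p = (z, w)" "z \<in> Z" "w \<in> W" by auto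
  then have "p \<in> TB n \<times> TB n" using large centers by (auto simp: Z_def W_def U_def V_def)
  then have integrable: "set_integrable ?M (TB n \<times> TB n) (\<lambda>(u, \<eta>). K z w u \<eta> * f (u, \<eta>))"
    and bound: "cmod (int_op n a K f (z, w)) \<le> C * enn2real (mixnorm11 n \<alpha> f)"
    using p_good zw(1) by auto
  have "C * integral\<^sup>L ?M h < cmod (int_op n a K f (z, w))"
    unfolding f_def h_def
    by (rule norm_int_op_indicator_gt[where K = K and z = z and w = w,
          OF UV(1) UV_TB UV(2,3) r(2,3) integrable[unfolded f_def] h_integrable[unfolded h_def]])
      (use large zw(2,3) in \<open>auto simp: Z_def W_def U_def V_def\<close>)
  then show False using bound mixnorm_h by simp
qed

lemma bounded_11_inf_iff_kernel_bound:
  fixes K :: kernel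
  assumes n: "0 < n"
    and K_measurable: "\<And>z w. z \<in> space (CV n) \<Longrightarrow> w \<in> space (CV n) \<Longrightarrow>
      (\<lambda>q. K z w (fst q) (snd q)) \<in> borel_measurable (CV n \<Otimes>\<^sub>M CV n)"
    and K_cont: "\<And>z w u e. z \<in> TB n \<Longrightarrow> w \<in> TB n \<Longrightarrow> u \<in> TB n \<Longrightarrow> e \<in> TB n \<Longrightarrow>
      isCont (\<lambda>x. K (fst (fst x)) (snd (fst x)) (fst (snd x)) (snd (snd x))) ((z, w), (u, e))"
  shows "bounded_11_inf n \<alpha> a K \<longleftrightarrow> (\<exists>C. kernel_bound n \<alpha> a K C)"
  unfolding bounded_11_inf_iff_ex_bounded_11_inf_by
proof
  assume "\<exists>C. bounded_11_inf_by n \<alpha> a K C"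
  then obtain C where "bounded_11_inf_by n \<alpha> a K C" ..
  then have "kernel_bound n \<alpha> a K C"
    unfolding kernel_bound_def using kernel_bound_at_point[OF n _ K_cont] by blast
  then show "\<exists>C. kernel_bound n \<alpha> a K C" ..
next
  assume "\<exists>C. kernel_bound n \<alpha> a K C"
  then obtain C where "kernel_bound n \<alpha> a K C" ..
  then show "\<exists>C. bounded_11_inf_by n \<alpha> a K C"
    using kernel_bound_imp_bounded_11_inf[where K = K, OF n K_measurable] by blast
qed

section \<open>The kernels of \<open>S\<close> and \<open>T\<close>\<close>

definition kernel_modulus :: "nat \<Rightarrow> real \<times> real \<Rightarrow> real \<times> real \<Rightarrow> cpoint \<Rightarrow> cpoint \<Rightarrow> cpoint \<Rightarrow> cpoint \<Rightarrow> real" where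
  "kernel_modulus n b c z w u e =
     rho n u powr fst b * rho n e powr snd b / (cmod (rho2 n z u) powr fst c * cmod (rho2 n w e) powr snd c)"

lemma norm_kernS: "cmod (kernS n b c z w u e) = kernel_modulus n b c z w u e"
  unfolding kernS_def kernel_modulus_def norm_of_real by (rule abs_of_nonneg) simp

lemma norm_kernT: "cmod (kernT n b c z w u e) = kernel_modulus n b c z w u e"
  unfolding kernT_def kernel_modulus_def by (simp add: norm_divide norm_mult norm_powr_real_powr')

lemma isCont_kernS:
  assumes "z \<in> TB n" "w \<in> TB n" "u \<in> TB n" "e \<in> TB n"
  shows "isCont (\<lambda>x. kernS n b c (fst (fst x)) (snd (fst x)) (fst (snd x)) (snd (snd x))) ((z, w), (u, e))"
proof -
  let ?x0 = "((z, w), (u, e))"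
  have rho: "isCont (\<lambda>x. rho n (fst (snd x)) powr fst b) ?x0" "isCont (\<lambda>x. rho n (snd (snd x)) powr snd b) ?x0"
    using assms by (intro continuous_intros; simp add: TB_def)+
  have rho2: "isCont (\<lambda>x. cmod (rho2 n (fst (fst x)) (fst (snd x))) powr fst c) ?x0"
    "isCont (\<lambda>x. cmod (rho2 n (snd (fst x)) (snd (snd x))) powr snd c) ?x0"
    using assms rho2_nonzero by (intro continuous_intros; simp)+
  have "isCont (\<lambda>x. rho n (fst (snd x)) powr fst b * rho n (snd (snd x)) powr snd b /
      (cmod (rho2 n (fst (fst x)) (fst (snd x))) powr fst c * cmod (rho2 n (snd (fst x)) (snd (snd x))) powr snd c)) ?x0"
    using assms rho2_nonzero
    by (intro continuous_at_within_divide continuous_mult rho rho2) auto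
  then show ?thesis unfolding kernS_def by (rule continuous_of_real)
qed

lemma isCont_kernT:
  assumes "z \<in> TB n" "w \<in> TB n" "u \<in> TB n" "e \<in> TB n"
  shows "isCont (\<lambda>x. kernT n b c (fst (fst x)) (snd (fst x)) (fst (snd x)) (snd (snd x))) ((z, w), (u, e))"
proof -
  let ?x0 = "((z, w), (u, e))"
  have rho: "isCont (\<lambda>x. rho n (fst (snd x)) powr fst b) ?x0" "isCont (\<lambda>x. rho n (snd (snd x)) powr snd b) ?x0"
    using assms by (intro continuous_intros; simp add: TB_def)+
  have rho2: "isCont (\<lambda>x. rho2 n (fst (fst x)) (fst (snd x)) powr of_real (fst c)) ?x0"
    "isCont (\<lambda>x. rho2 n (snd (fst x)) (snd (snd x)) powr of_real (snd c)) ?x0"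
    using assms rho2_not_nonpos_Reals
    by (intro isCont_powr_complex continuous_intros; simp)+
  have "isCont (\<lambda>x. of_real (rho n (fst (snd x)) powr fst b * rho n (snd (snd x)) powr snd b) /
      (rho2 n (fst (fst x)) (fst (snd x)) powr of_real (fst c) * rho2 n (snd (fst x)) (snd (snd x)) powr of_real (snd c))) ?x0"
    using assms rho2_nonzero
    by (intro continuous_at_within_divide continuous_mult continuous_of_real rho rho2) auto
  then show ?thesis unfolding kernT_def .
qed

lemma measurable_kernS_kernT:
  assumes n: "0 < n" and "z \<in> space (CV n)" "w \<in> space (CV n)"
  shows "(\<lambda>q. kernS n b c z w (fst q) (snd q)) \<in> borel_measurable (CV n \<Otimes>\<^sub>M CV n)"
    and "(\<lambda>q. kernT n b c z w (fst q) (snd q)) \<in> borel_measurable (CV n \<Otimes>\<^sub>M CV n)"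
proof -
  have [measurable]: "(\<lambda>q. rho n (fst q)) \<in> borel_measurable (CV n \<Otimes>\<^sub>M CV n)"
    "(\<lambda>q. rho n (snd q)) \<in> borel_measurable (CV n \<Otimes>\<^sub>M CV n)"
    using n by (intro measurable_rho; simp)+
  have rho2: "(\<lambda>q. rho2 n z (fst q)) \<in> borel_measurable (CV n \<Otimes>\<^sub>M CV n)"
    "(\<lambda>q. rho2 n w (snd q)) \<in> borel_measurable (CV n \<Otimes>\<^sub>M CV n)"
    using assms by (intro measurable_rho2; simp)+
  note [measurable] = rho2 rho2[THEN borel_measurable_powr_complex]
  show "(\<lambda>q. kernS n b c z w (fst q) (snd q)) \<in> borel_measurable (CV n \<Otimes>\<^sub>M CV n)"
    unfolding kernS_def by measurable
  show "(\<lambda>q. kernT n b c z w (fst q) (snd q)) \<in> borel_measurable (CV n \<Otimes>\<^sub>M CV n)"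
    unfolding kernT_def by measurable
qed

lemma exponents_of_kernel_bound:
  fixes K :: kernel
  assumes n: "0 < n"
    and modulus: "\<And>z w u e. cmod (K z w u e) = kernel_modulus n b c z w u e"
    and bound: "kernel_bound n \<alpha> a K C"
  shows "(0 \<le> fst a \<and> fst b \<ge> fst \<alpha> \<and> fst c = fst a + fst b - fst \<alpha>) \<and>
    (0 \<le> snd a \<and> snd b \<ge> snd \<alpha> \<and> snd c = snd a + snd b - snd \<alpha>)"
proof -
  let ?p = "axis_point n"
  have norm_rho2: "cmod (rho2 n (?p t) (?p s)) = (t + s) / 2" if "0 < t" "0 < s" for t s
    using that by (simp only: rho2_axis_point[OF n] norm_of_real) simp
  have "t powr fst a * s powr fst b / ((t + s) / 2) powr fst c \<le> C * s powr fst \<alpha>"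
    if "0 < t" "0 < s" for t s
    using bound[unfolded kernel_bound_def, rule_format, OF axis_point_TB[OF n that(1)]
        axis_point_TB[OF n, of 1] axis_point_TB[OF n that(2)] axis_point_TB[OF n, of 1]] that
    by (simp add: modulus kernel_modulus_def rho_weight_def rho_axis_point[OF n] norm_rho2)
  moreover have "t powr snd a * s powr snd b / ((t + s) / 2) powr snd c \<le> C * s powr snd \<alpha>"
    if "0 < t" "0 < s" for t s
    using bound[unfolded kernel_bound_def, rule_format, OF axis_point_TB[OF n, of 1]
        axis_point_TB[OF n that(1)] axis_point_TB[OF n, of 1] axis_point_TB[OF n that(2)]] that
    by (simp add: modulus kernel_modulus_def rho_weight_def rho_axis_point[OF n] norm_rho2)
  ultimately show ?thesis using exponents_of_mean_powr_bound by blast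
qed

lemma kernel_bound_of_exponents:
  fixes K :: kernel
  assumes modulus: "\<And>z w u e. cmod (K z w u e) = kernel_modulus n b c z w u e"
    and a: "0 \<le> fst a" "0 \<le> snd a" and b: "fst \<alpha> \<le> fst b" "snd \<alpha> \<le> snd b"
    and c: "fst c = fst a + fst b - fst \<alpha>" "snd c = snd a + snd b - snd \<alpha>"
  shows "kernel_bound n \<alpha> a K (2 powr fst c * 2 powr snd c)"
  unfolding kernel_bound_def
proof (intro ballI)
  fix z w u e assume "z \<in> TB n" "w \<in> TB n" "u \<in> TB n" "e \<in> TB n"
  then have rho: "0 < rho n z" "0 < rho n w" "0 < rho n u" "0 < rho n e" by (auto simp: TB_def)
  have "rho n z powr fst a * rho n u powr fst b / cmod (rho2 n z u) powr fst c
      \<le> 2 powr fst c * rho n u powr fst \<alpha>"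
    unfolding c(1) using rho a b norm_rho2_ge_mean[of n z u] by (intro powr_mult_div_mean_powr_le) auto
  moreover have "rho n w powr snd a * rho n e powr snd b / cmod (rho2 n w e) powr snd c
      \<le> 2 powr snd c * rho n e powr snd \<alpha>"
    unfolding c(2) using rho a b norm_rho2_ge_mean[of n w e] by (intro powr_mult_div_mean_powr_le) auto
  ultimately have "(rho n z powr fst a * rho n u powr fst b / cmod (rho2 n z u) powr fst c) *
      (rho n w powr snd a * rho n e powr snd b / cmod (rho2 n w e) powr snd c)
      \<le> (2 powr fst c * rho n u powr fst \<alpha>) * (2 powr snd c * rho n e powr snd \<alpha>)"
    by (intro mult_mono) auto
  then show "rho_weight n a (z, w) * cmod (K z w u e) \<le> 2 powr fst c * 2 powr snd c * rho_weight n \<alpha> (u, e)"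
    by (simp add: modulus kernel_modulus_def rho_weight_def ac_simps)
qed

lemma ex_kernel_bound_iff_exponents:
  fixes K :: kernel
  assumes "0 < n" and "\<And>z w u e. cmod (K z w u e) = kernel_modulus n b c z w u e"
  shows "(\<exists>C. kernel_bound n \<alpha> a K C) \<longleftrightarrow>
    (0 \<le> fst a \<and> fst b \<ge> fst \<alpha> \<and> fst c = fst a + fst b - fst \<alpha>) \<and>
    (0 \<le> snd a \<and> snd b \<ge> snd \<alpha> \<and> snd c = snd a + snd b - snd \<alpha>)"
  using exponents_of_kernel_bound[OF assms] kernel_bound_of_exponents[OF assms(2)] by blast

theorem theorem6p6:
  fixes n :: nat and a b c \<alpha> :: "real \<times> real"
  assumes "0 < n" and "fst \<alpha> > -1" and "snd \<alpha> > -1"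
  shows "(bounded_11_inf n \<alpha> a (kernS n b c) \<longleftrightarrow>
            (0 \<le> fst a \<and> fst b \<ge> fst \<alpha> \<and> fst c = fst a + fst b - fst \<alpha>) \<and>
            (0 \<le> snd a \<and> snd b \<ge> snd \<alpha> \<and> snd c = snd a + snd b - snd \<alpha>))
       \<and> (bounded_11_inf n \<alpha> a (kernT n b c) \<longleftrightarrow>
            (0 \<le> fst a \<and> fst b \<ge> fst \<alpha> \<and> fst c = fst a + fst b - fst \<alpha>) \<and>
            (0 \<le> snd a \<and> snd b \<ge> snd \<alpha> \<and> snd c = snd a + snd b - snd \<alpha>))"
proof -
  have S: "bounded_11_inf n \<alpha> a (kernS n b c) \<longleftrightarrow> (\<exists>C. kernel_bound n \<alpha> a (kernS n b c) C)"
    using assms(1) by (intro bounded_11_inf_iff_kernel_bound measurable_kernS_kernT isCont_kernS)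
  have T: "bounded_11_inf n \<alpha> a (kernT n b c) \<longleftrightarrow> (\<exists>C. kernel_bound n \<alpha> a (kernT n b c) C)"
    using assms(1) by (intro bounded_11_inf_iff_kernel_bound measurable_kernS_kernT isCont_kernT)
  show ?thesis
    unfolding S T using assms(1) by (intro conjI ex_kernel_bound_iff_exponents norm_kernS norm_kernT)
qed

end
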